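(* Let $\mathcal S$ be the toy stabilizer group of a maximal information (pure) state on $N$ elementary systems, and let parties $A$ and $B$ hold $N_A$ and $N_B$ of these elementary systems respectively, with $N_A+N_B = N$. Let $\mathcal S_A$ (resp. $\mathcal S_B$) be the subgroup of elements of $\mathcal S$ acting as the identity on every elementary system of $B$ (resp. of $A$), and $\mathcal S_A\cdot\mathcal S_B$ the group they generate. Then the state is entangled (with respect to $A|B$) if and only if $\mathcal S\neq\mathcal S_A\cdot\mathcal S_B$.
   Context: Toy Pauli matrices $\mathcal{X} = \mathrm{diag}(1,-1,1,-1)$, $\mathcal{Y} = \mathrm{diag}(1,-1,-1,1)$, $\mathcal{Z} = \mathrm{diag}(1,1,-1,-1)$; toy Pauli group $G_N = \{\alpha\,p_1\otimes\cdots\otimes p_N: p_i\in\{\mathbb 1_4,\mathcal X,\mathcal Y,\mathcal Z\},\alpha=\pm1\}$. Elements $g,h\in G_N$ "commute" if their images under the homomorphism $\mathcal X_k\mapsto X_k$, $\mathcal Z_k\mapsto Z_k$, $-\mathbb 1\mapsto -\mathbb 1$ into the $N$-qubit Pauli group commute. A toy stabilizer group is a subgroup of $G_N$ of pairwise "commuting" elements not containing $-\mathbb 1$; its epistemic state is the set of ontic states $e_{i_1}\otimes\cdots\otimes e_{i_N}$ fixed by all its elements. It is a maximal information state if it has $N$ independent generators. A product state between $A$ and $B$ is an epistemic state of the form $E_A\times E_B = \{(a,b): a\in E_A, b\in E_B\}$ with $E_A,E_B$ valid epistemic states on $A$ and $B$. A pure state is entangled if it cannot be written as a product state of epistemic states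 on $A$ and $B$. *)

theory Defs
  imports Main
begin

text \<open>The four single-system toy Pauli matrices; they are diagonal 4x4 matrices,
  and an elementary system has ontic states e_1..e_4, indexed here by 0..3.\<close>
datatype tpauli = PI | PX | PY | PZ

fun pdiag :: "tpauli \<Rightarrow> nat \<Rightarrow> int" where
  "pdiag PI i = 1"
| "pdiag PX i = [1,-1,1,-1] ! i"
| "pdiag PY i = [1,-1,-1,1] ! i"
| "pdiag PZ i = [1,1,-1,-1] ! i"

text \<open>Product of toy Pauli matrices (matrix product of the diagonal matrices;
  no phases occur: X*Z = Y etc.).\<close>
fun pmul :: "tpauli \<Rightarrow> tpauli \<Rightarrow> tpauli" where
  "pmul PI q = q"
| "pmul p PI = p"
| "pmul PX PX = PI" | "pmul PY PY = PI" | "pmul PZ PZ = PI"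
| "pmul PX PY = PZ" | "pmul PY PX = PZ"
| "pmul PX PZ = PY" | "pmul PZ PX = PY"
| "pmul PY PZ = PX" | "pmul PZ PY = PX"

text \<open>An element alpha p_1 (x) ... (x) p_N of G_N is represented by the pair (alpha, [p_1,...,p_N]).\<close>
type_synonym toy = "int \<times> tpauli list"

definition toyG :: "nat \<Rightarrow> toy set" where
  "toyG n = {(a, ps). (a = 1 \<or> a = -1) \<and> length ps = n}"

definition tmul :: "toy \<Rightarrow> toy \<Rightarrow> toy" where
  "tmul g h = (fst g * fst h, map2 pmul (snd g) (snd h))"

definition tone :: "nat \<Rightarrow> toy" where
  "tone n = (1, replicate n PI)"

definition tminus_one :: "nat \<Rightarrow> toy" where
  "tminus_one n = (-1, replicate n PI)"

text \<open>"Commutation": via the map X_k -> X_k, Z_k -> Z_k (so Y_k -> X_k Z_k) into the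
  qubit Pauli group; two qubit Paulis commute iff their symplectic form vanishes mod 2.\<close>
fun xbit :: "tpauli \<Rightarrow> nat" where
  "xbit PX = 1" | "xbit PY = 1" | "xbit PZ = 0" | "xbit PI = 0"
fun zbit :: "tpauli \<Rightarrow> nat" where
  "zbit PZ = 1" | "zbit PY = 1" | "zbit PX = 0" | "zbit PI = 0"

definition tcommute :: "toy \<Rightarrow> toy \<Rightarrow> bool" where
  "tcommute g h \<longleftrightarrow>
     even (sum_list (map2 (\<lambda>p q. xbit p * zbit q + zbit p * xbit q) (snd g) (snd h)))"

inductive_set gen :: "nat \<Rightarrow> toy set \<Rightarrow> toy set" for n :: nat and G :: "toy set" where
  gen_one: "tone n \<in> gen n G"
| gen_base: "g \<in> G \<Longrightarrow> g \<in> gen n G"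
| gen_mul: "g \<in> gen n G \<Longrightarrow> h \<in> gen n G \<Longrightarrow> tmul g h \<in> gen n G"

definition toy_subgroup :: "nat \<Rightarrow> toy set \<Rightarrow> bool" where
  "toy_subgroup n S \<longleftrightarrow> S \<subseteq> toyG n \<and> tone n \<in> S \<and> (\<forall>g\<in>S. \<forall>h\<in>S. tmul g h \<in> S)"

definition toy_stabilizer :: "nat \<Rightarrow> toy set \<Rightarrow> bool" where
  "toy_stabilizer n S \<longleftrightarrow> toy_subgroup n S \<and> (\<forall>g\<in>S. \<forall>h\<in>S. tcommute g h)
     \<and> tminus_one n \<notin> S"

definition independent :: "nat \<Rightarrow> toy set \<Rightarrow> bool" where
  "independent n gs \<longleftrightarrow> (\<forall>g\<in>gs. g \<notin> gen n (gs - {g}))"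

definition max_info :: "nat \<Rightarrow> toy set \<Rightarrow> bool" where
  "max_info n S \<longleftrightarrow> (\<exists>gs. gs \<subseteq> S \<and> finite gs \<and> card gs = n \<and> independent n gs \<and> gen n gs = S)"

text \<open>Ontic state e_{i_1} (x) ... (x) e_{i_N}, represented by [i_1,...,i_N] with i_k in {0..3}.\<close>
definition ontic :: "nat \<Rightarrow> nat list set" where
  "ontic n = {s. length s = n \<and> (\<forall>i\<in>set s. i < 4)}"

text \<open>g fixes the ontic state s iff the corresponding diagonal entry of g is 1.\<close>
definition fixes_ontic :: "toy \<Rightarrow> nat list \<Rightarrow> bool" where
  "fixes_ontic g s \<longleftrightarrow> fst g * prod_list (map2 pdiag (snd g) s) = 1"

definition epistemic :: "nat \<Rightarrow> toy set \<Rightarrow> nat list set" where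
  "epistemic n S = {s \<in> ontic n. \<forall>g\<in>S. fixes_ontic g s}"

definition valid_epistemic :: "nat \<Rightarrow> nat list set \<Rightarrow> bool" where
  "valid_epistemic n E \<longleftrightarrow> (\<exists>S. toy_stabilizer n S \<and> E = epistemic n S)"

section \<open>Bipartition: A = first NA systems, B = last NB systems\<close>

definition entangled :: "nat \<Rightarrow> nat \<Rightarrow> toy set \<Rightarrow> bool" where
  "entangled NA NB S \<longleftrightarrow>
     \<not> (\<exists>EA EB. valid_epistemic NA EA \<and> valid_epistemic NB EB \<and>
          epistemic (NA + NB) S = {a @ b | a b. a \<in> EA \<and> b \<in> EB})"

definition S_A :: "nat \<Rightarrow> nat \<Rightarrow> toy set \<Rightarrow> toy set" where
  "S_A NA NB S = {g \<in> S. \<forall>k. NA \<le> k \<and> k < NA + NB \<longrightarrow> snd g ! k = PI}"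

definition S_B :: "nat \<Rightarrow> nat \<Rightarrow> toy set \<Rightarrow> toy set" where
  "S_B NA NB S = {g \<in> S. \<forall>k. k < NA \<longrightarrow> snd g ! k = PI}"

end

theory Submission
  imports Defs
begin

(* For an ontic state s, the map g \<mapsto> toy_entry g s is a character of the abelian group G_n
   sending -1 to -1, and summing these characters over all ontic states detects the identity.
   Averaging over a subgroup T that avoids -1 therefore separates every g \<notin> T from T by an
   ontic state fixed by T but not by g: a toy stabilizer group consists exactly of the elements
   fixing its epistemic state. If the epistemic state of S is a product E_A \<times> E_B with
   stabilizers T_A and T_B, the padded elements of T_A and T_B thus lie in S_A and S_B, so
   S_A \<cdot> S_B has the epistemic state of S and hence equals S. Conversely, if S = S_A \<cdot> S_B,
   the restrictions of S_A and S_B to A and B are stabilizer groups whose epistemic states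
   multiply to that of S. *)

definition toy_entry :: "toy \<Rightarrow> nat list \<Rightarrow> int" where
  "toy_entry g s = fst g * prod_list (map2 pdiag (snd g) s)"

lemma fixes_ontic_iff_toy_entry: "fixes_ontic g s \<longleftrightarrow> toy_entry g s = 1"
  by (simp add: fixes_ontic_def toy_entry_def)

lemma epistemic_eq: "epistemic n X = {s \<in> ontic n. \<forall>g\<in>X. toy_entry g s = 1}"
  by (simp add: epistemic_def fixes_ontic_iff_toy_entry)

lemma epistemic_antimono: "X \<subseteq> Y \<Longrightarrow> epistemic n Y \<subseteq> epistemic n X"
  by (auto simp: epistemic_def)

lemma mem_toyG_iff: "g \<in> toyG n \<longleftrightarrow> (fst g = 1 \<or> fst g = -1) \<and> length (snd g) = n"
  by (cases g) (simp add: toyG_def)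

lemma finite_toyG: "finite (toyG n)"
proof (rule finite_subset)
  show "toyG n \<subseteq> {1, -1} \<times> {ps. set ps \<subseteq> {PI, PX, PY, PZ} \<and> length ps = n}"
    by (auto simp: toyG_def intro: tpauli.exhaust)
  show "finite ({1, -1} \<times> {ps. set ps \<subseteq> {PI, PX, PY, PZ} \<and> length ps = n})"
    by (simp add: finite_lists_length_eq)
qed

lemma ontic_Suc: "ontic (Suc n) = (\<lambda>(i, s). i # s) ` ({..<4} \<times> ontic n)"
  by (auto simp: ontic_def length_Suc_conv)

lemma append_mem_ontic_iff:
  "length a = m \<Longrightarrow> a @ b \<in> ontic (m + n) \<longleftrightarrow> a \<in> ontic m \<and> b \<in> ontic n"
  by (auto simp: ontic_def)

lemma pdiag_pmul: "i < 4 \<Longrightarrow> pdiag (pmul p q) i = pdiag p i * pdiag q i"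
  by (cases p; cases q) (auto simp: less_Suc_eq numeral_eq_Suc)

lemma pdiag_sign: "i < 4 \<Longrightarrow> pdiag p i = 1 \<or> pdiag p i = -1"
  by (cases p) (auto simp: less_Suc_eq numeral_eq_Suc)

lemma sum_pdiag: "(\<Sum>i<4. pdiag p i) = (if p = PI then 4 else 0)"
  by (cases p) (simp_all add: numeral_eq_Suc)

lemma pmul_self: "pmul p p = PI"
  by (cases p) simp_all

lemma pmul_eq_PI_iff: "pmul p q = PI \<longleftrightarrow> p = q"
  by (cases p; cases q) simp_all

lemma pmul_assoc: "pmul (pmul p q) r = pmul p (pmul q r)"
  by (cases p; cases q; cases r) simp_all

lemma map2_pmul_assoc: "map2 pmul (map2 pmul xs ys) zs = map2 pmul xs (map2 pmul ys zs)"
proof (induction xs arbitrary: ys zs)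
  case (Cons x xs)
  then show ?case by (cases ys; cases zs) (simp_all add: pmul_assoc)
qed simp

lemma map2_pmul_self: "map2 pmul xs xs = replicate (length xs) PI"
  by (induction xs) (simp_all add: pmul_self)

lemma map2_pmul_replicate_PI: "map2 pmul (replicate (length xs) PI) xs = xs"
  by (induction xs) simp_all

lemma map2_pmul_eq_replicate_PI_iff:
  "length xs = length ys \<Longrightarrow> map2 pmul xs ys = replicate (length xs) PI \<longleftrightarrow> xs = ys"
  by (induction xs ys rule: list_induct2) (simp_all add: pmul_eq_PI_iff)

lemma tmul_assoc: "tmul (tmul g h) k = tmul g (tmul h k)"
  by (simp add: tmul_def map2_pmul_assoc mult.assoc)

lemma tmul_mem_toyG: "g \<in> toyG n \<Longrightarrow> h \<in> toyG n \<Longrightarrow> tmul g h \<in> toyG n"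
  by (auto simp: toyG_def tmul_def)

lemma tmul_tone_left: "g \<in> toyG n \<Longrightarrow> tmul (tone n) g = g"
  by (auto simp: tmul_def tone_def toyG_def map2_pmul_replicate_PI)

lemma tmul_self: "g \<in> toyG n \<Longrightarrow> tmul g g = tone n"
  by (auto simp: tmul_def tone_def toyG_def map2_pmul_self)

lemma tmul_cancel_left: "g \<in> toyG n \<Longrightarrow> h \<in> toyG n \<Longrightarrow> tmul g (tmul g h) = h"
  by (simp add: tmul_assoc[symmetric] tmul_self tmul_tone_left)

lemma tone_mem_toyG: "tone n \<in> toyG n"
  by (simp add: tone_def toyG_def)

lemma toy_entry_tone: "toy_entry (tone n) s = 1"
  by (simp add: toy_entry_def tone_def zip_replicate1 comp_def map_replicate_const)

lemma toy_entry_tmul: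
  assumes "g \<in> toyG n" "h \<in> toyG n" "s \<in> ontic n"
  shows "toy_entry (tmul g h) s = toy_entry g s * toy_entry h s"
proof -
  have "prod_list (map2 pdiag (map2 pmul ps qs) s) =
        prod_list (map2 pdiag ps s) * prod_list (map2 pdiag qs s)"
    if "length ps = length qs" "length qs = length s" "\<forall>i\<in>set s. i < 4" for ps qs s
    using that by (induction ps qs s rule: list_induct3) (simp_all add: pdiag_pmul)
  then show ?thesis
    using assms by (simp add: toy_entry_def tmul_def mem_toyG_iff ontic_def)
qed

lemma toy_entry_sign:
  assumes "g \<in> toyG n" "s \<in> ontic n"
  shows "toy_entry g s = 1 \<or> toy_entry g s = -1"
proof -
  have "prod_list (map2 pdiag ps s) = 1 \<or> prod_list (map2 pdiag ps s) = -1"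
    if "\<forall>i\<in>set s. i < 4" for ps s
    using that
  proof (induction ps s rule: list_induct2')
    case (4 p ps i s)
    then show ?case using pdiag_sign[of i p] by auto
  qed simp_all
  then have "prod_list (map2 pdiag (snd g) s) \<in> {1, -1}"
    using assms(2) by (simp add: ontic_def)
  then show ?thesis
    using assms(1) by (auto simp: toy_entry_def mem_toyG_iff)
qed

lemma sum_prod_map2_pdiag:
  "(\<Sum>s\<in>ontic (length ps). prod_list (map2 pdiag ps s)) =
     (if ps = replicate (length ps) PI then 4 ^ length ps else 0)"
proof (induction ps)
  case Nil
  have "ontic 0 = {[]}" by (auto simp: ontic_def)
  then show ?case by simp
next
  case (Cons p ps)
  have "inj_on (\<lambda>(i, s). i # s) A" for A :: "(nat \<times> nat list) set"
    by (auto simp: inj_on_def)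
  then have "(\<Sum>s\<in>ontic (length (p # ps)). prod_list (map2 pdiag (p # ps) s)) =
             (\<Sum>i<4. \<Sum>s\<in>ontic (length ps). pdiag p i * prod_list (map2 pdiag ps s))"
    by (simp add: ontic_Suc sum.reindex sum.cartesian_product split_def)
  also have "\<dots> = (\<Sum>i<4. pdiag p i) * (\<Sum>s\<in>ontic (length ps). prod_list (map2 pdiag ps s))"
    by (simp add: sum_product)
  finally show ?case by (simp add: Cons.IH sum_pdiag)
qed

lemma sum_toy_entry_ontic:
  "g \<in> toyG n \<Longrightarrow>
     (\<Sum>s\<in>ontic n. toy_entry g s) = (if snd g = replicate n PI then fst g * 4 ^ n else 0)"
  using sum_prod_map2_pdiag[of "snd g"]
  by (simp add: toy_entry_def mem_toyG_iff sum_distrib_left[symmetric])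

lemma sum_toy_entry_subgroup_eq_0:
  assumes T: "finite T" "T \<subseteq> toyG n" "\<forall>g\<in>T. \<forall>h\<in>T. tmul g h \<in> T"
    and h0: "h0 \<in> T" "toy_entry h0 s \<noteq> 1" and s: "s \<in> ontic n"
  shows "(\<Sum>h\<in>T. toy_entry h s) = 0"
proof -
  have "toy_entry h0 s = -1" using toy_entry_sign[of h0 n s] T h0 s by auto
  have involution: "\<forall>h\<in>T. tmul h0 (tmul h0 h) = h"
    using T h0 by (auto intro: tmul_cancel_left)
  have "(\<Sum>h\<in>T. toy_entry h s) = (\<Sum>h\<in>T. toy_entry (tmul h0 h) s)"
    by (rule sum.reindex_bij_witness[of _ "tmul h0" "tmul h0"])
       (use T h0 involution in auto)
  also have "\<dots> = (\<Sum>h\<in>T. - toy_entry h s)"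
  proof (rule sum.cong)
    fix h assume "h \<in> T"
    then show "toy_entry (tmul h0 h) s = - toy_entry h s"
      using T(2) h0(1) s toy_entry_tmul[of h0 n h s] \<open>toy_entry h0 s = -1\<close> by auto
  qed simp
  also have "\<dots> = - (\<Sum>h\<in>T. toy_entry h s)"
    by (rule sum_negf)
  finally show ?thesis by simp
qed

lemma sum_toy_entry_ontic_nonneg:
  assumes "h \<in> toyG n" "h \<noteq> tminus_one n"
  shows "0 \<le> (\<Sum>s\<in>ontic n. toy_entry h s)"
proof -
  have "fst h = 1" if "snd h = replicate n PI"
    using assms that by (cases h) (auto simp: mem_toyG_iff tminus_one_def)
  then show ?thesis using assms(1) by (simp add: sum_toy_entry_ontic)
qed

lemma sum_toy_entry_ontic_tmul_nonpos:
  assumes "h \<in> toyG n" "g \<in> toyG n" "h \<noteq> g"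
  shows "(\<Sum>s\<in>ontic n. toy_entry (tmul h g) s) \<le> 0"
proof -
  have "fst h * fst g = -1" if "map2 pmul (snd h) (snd g) = replicate n PI"
  proof -
    have "snd h = snd g"
      using that assms(1,2) map2_pmul_eq_replicate_PI_iff[of "snd h" "snd g"]
      by (simp add: mem_toyG_iff)
    then have "fst h \<noteq> fst g" using assms(3) by (simp add: prod_eq_iff)
    then show ?thesis using assms(1,2) by (auto simp: mem_toyG_iff)
  qed
  then show ?thesis
    using assms(1,2) by (simp add: sum_toy_entry_ontic tmul_mem_toyG) (simp add: tmul_def)
qed

lemma separating_ontic_state:
  assumes T: "toy_subgroup n T" "tminus_one n \<notin> T" and g: "g \<in> toyG n" "g \<notin> T"
  shows "\<exists>s\<in>ontic n. (\<forall>h\<in>T. toy_entry h s = 1) \<and> toy_entry g s \<noteq> 1"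
proof (rule ccontr)
  assume "\<not> ?thesis"
  then have no_separation:
    "\<And>s. s \<in> ontic n \<Longrightarrow> \<forall>h\<in>T. toy_entry h s = 1 \<Longrightarrow> toy_entry g s = 1"
    by blast
  have T_sub: "T \<subseteq> toyG n" and one: "tone n \<in> T" and closed: "\<forall>h\<in>T. \<forall>k\<in>T. tmul h k \<in> T"
    using T(1) by (auto simp: toy_subgroup_def)
  have fin: "finite T" using T_sub finite_toyG by (rule finite_subset)
  (* Sum toy_entry h s - toy_entry (tmul h g) s over s \<in> ontic n and h \<in> T in both orders:
     for fixed s the sum over T vanishes because no s separates g from T, while for fixed h
     the sum over s is nonnegative, and positive at h = tone n. *)
  define D where "D x = (\<Sum>s\<in>ontic n. toy_entry x s)" for x
  have "(\<Sum>h\<in>T. toy_entry h s - toy_entry (tmul h g) s) = 0" if s: "s \<in> ontic n" for s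
  proof -
    have "(\<Sum>h\<in>T. toy_entry (tmul h g) s) = toy_entry g s * (\<Sum>h\<in>T. toy_entry h s)"
      unfolding sum_distrib_left
      by (rule sum.cong) (use T_sub g s in \<open>auto simp: toy_entry_tmul subsetD\<close>)
    moreover have "toy_entry g s = 1 \<or> (\<Sum>h\<in>T. toy_entry h s) = 0"
      using no_separation[OF s] sum_toy_entry_subgroup_eq_0[OF fin T_sub closed _ _ s] by blast
    ultimately show ?thesis by (auto simp: sum_subtractf)
  qed
  then have "(\<Sum>s\<in>ontic n. \<Sum>h\<in>T. toy_entry h s - toy_entry (tmul h g) s) = 0"
    by simp
  then have "(\<Sum>h\<in>T. D h - D (tmul h g)) = 0"
    by (simp add: D_def sum_subtractf[symmetric] sum.swap[of _ T])
  moreover have "0 < (\<Sum>h\<in>T. D h - D (tmul h g))"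
  proof (rule sum_pos2[OF fin one])
    have nonneg: "0 \<le> D h" and nonpos: "D (tmul h g) \<le> 0" if "h \<in> T" for h
      using that T_sub T(2) g sum_toy_entry_ontic_nonneg sum_toy_entry_ontic_tmul_nonpos
      unfolding D_def by blast+
    have "D (tone n) = 4 ^ n" by (simp add: D_def sum_toy_entry_ontic tone_def toyG_def)
    then show "0 < D (tone n) - D (tmul (tone n) g)"
      using nonpos[OF one] zero_less_power[of "4::int" n] by linarith
    show "0 \<le> D h - D (tmul h g)" if "h \<in> T" for h
      using nonneg[OF that] nonpos[OF that] by simp
  qed
  ultimately show False by simp
qed

lemma gen_subset_toyG: "X \<subseteq> toyG n \<Longrightarrow> gen n X \<subseteq> toyG n"
proof
  fix g assume "X \<subseteq> toyG n" "g \<in> gen n X"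
  then show "g \<in> toyG n"
    by (induction rule: gen.induct[OF \<open>g \<in> gen n X\<close>])
       (auto simp: tone_mem_toyG tmul_mem_toyG)
qed

lemma toy_subgroup_gen: "X \<subseteq> toyG n \<Longrightarrow> toy_subgroup n (gen n X)"
  by (simp add: toy_subgroup_def gen_subset_toyG gen.intros)

lemma gen_least: "toy_subgroup n S \<Longrightarrow> X \<subseteq> S \<Longrightarrow> gen n X \<subseteq> S"
proof
  fix g assume "toy_subgroup n S" "X \<subseteq> S" "g \<in> gen n X"
  then show "g \<in> S"
    by (induction rule: gen.induct[OF \<open>g \<in> gen n X\<close>]) (auto simp: toy_subgroup_def)
qed

lemma epistemic_gen:
  assumes "X \<subseteq> toyG n"
  shows "epistemic n (gen n X) = epistemic n X"
proof
  show "epistemic n (gen n X) \<subseteq> epistemic n X"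
    by (rule epistemic_antimono) (auto intro: gen_base)
  show "epistemic n X \<subseteq> epistemic n (gen n X)"
  proof
    fix s assume s: "s \<in> epistemic n X"
    have "toy_entry g s = 1" if "g \<in> gen n X" for g
      using that
    proof induction
      case gen_one
      then show ?case by (rule toy_entry_tone)
    next
      case (gen_mul g h)
      then show ?case
        using gen_subset_toyG[OF assms] s toy_entry_tmul[of g n h s] by (auto simp: epistemic_eq)
    qed (use s in \<open>simp add: epistemic_eq\<close>)
    then show "s \<in> epistemic n (gen n X)"
      using s by (simp add: epistemic_eq)
  qed
qed

lemma mem_iff_fixes_epistemic:
  assumes "toy_subgroup n T" "tminus_one n \<notin> T" "g \<in> toyG n"
  shows "g \<in> T \<longleftrightarrow> (\<forall>s\<in>epistemic n T. toy_entry g s = 1)"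
  using separating_ontic_state[OF assms] by (auto simp: epistemic_eq)

definition pad :: "nat \<Rightarrow> nat \<Rightarrow> toy \<Rightarrow> toy" where
  "pad l r g = (fst g, replicate l PI @ snd g @ replicate r PI)"

lemma pad_mem_toyG: "g \<in> toyG m \<Longrightarrow> pad l r g \<in> toyG (l + m + r)"
  by (simp add: pad_def mem_toyG_iff)

lemma pad_tone: "pad l r (tone m) = tone (l + m + r)"
  by (simp add: pad_def tone_def replicate_add)

lemma pad_tminus_one: "pad l r (tminus_one m) = tminus_one (l + m + r)"
  by (simp add: pad_def tminus_one_def replicate_add)

lemma pad_tmul:
  "length (snd g) = length (snd h) \<Longrightarrow> pad l r (tmul g h) = tmul (pad l r g) (pad l r h)"
  by (simp add: pad_def tmul_def)

lemma tcommute_pad: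
  "length (snd g) = length (snd h) \<Longrightarrow> tcommute (pad l r g) (pad l r h) \<longleftrightarrow> tcommute g h"
  by (simp add: pad_def tcommute_def sum_list_replicate)

lemma toy_entry_pad:
  "length a = l \<Longrightarrow> length c = length (snd g) \<Longrightarrow>
     toy_entry (pad l r g) (a @ c @ b) = toy_entry g c"
  by (simp add: pad_def toy_entry_def zip_replicate1 comp_def map_replicate_const)

lemma mem_pad_image_iff:
  assumes "g \<in> toyG (l + m + r)"
  shows "g \<in> pad l r ` toyG m \<longleftrightarrow> (\<forall>k<l + m + r. (k < l \<or> l + m \<le> k) \<longrightarrow> snd g ! k = PI)"
proof
  assume "g \<in> pad l r ` toyG m"
  then show "\<forall>k<l + m + r. (k < l \<or> l + m \<le> k) \<longrightarrow> snd g ! k = PI"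
    by (auto simp: pad_def mem_toyG_iff nth_append)
next
  assume PI: "\<forall>k<l + m + r. (k < l \<or> l + m \<le> k) \<longrightarrow> snd g ! k = PI"
  define xs where "xs = snd g"
  have len: "length xs = l + m + r" using assms by (simp add: xs_def mem_toyG_iff)
  have "take l xs = replicate l PI" "drop (l + m) xs = replicate r PI"
    by (rule nth_equalityI; use len PI in \<open>simp add: xs_def\<close>)+
  then have "xs = replicate l PI @ take m (drop l xs) @ replicate r PI"
    by (metis append_take_drop_id drop_drop add.commute)
  then have "g = pad l r (fst g, take m (drop l xs))"
    by (simp add: pad_def xs_def)
  moreover have "(fst g, take m (drop l xs)) \<in> toyG m"
    using assms len by (simp add: mem_toyG_iff)
  ultimately show "g \<in> pad l r ` toyG m" by blast
qed

definition local_group :: "nat \<Rightarrow> nat \<Rightarrow> nat \<Rightarrow> toy set \<Rightarrow> toy set" where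
  "local_group l m r S = {h \<in> toyG m. pad l r h \<in> S}"

lemma toy_stabilizer_local_group:
  assumes "toy_stabilizer (l + m + r) S"
  shows "toy_stabilizer m (local_group l m r S)"
  unfolding toy_stabilizer_def toy_subgroup_def
proof (intro conjI ballI)
  show "local_group l m r S \<subseteq> toyG m" by (auto simp: local_group_def)
  show "tone m \<in> local_group l m r S"
    using assms
    by (simp add: local_group_def pad_tone tone_mem_toyG toy_stabilizer_def toy_subgroup_def)
  show "tminus_one m \<notin> local_group l m r S"
    using assms by (simp add: local_group_def pad_tminus_one toy_stabilizer_def)
next
  fix g h assume "g \<in> local_group l m r S" "h \<in> local_group l m r S"
  then have g: "g \<in> toyG m" "pad l r g \<in> S" and h: "h \<in> toyG m" "pad l r h \<in> S"
    and len: "length (snd g) = length (snd h)"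
    by (auto simp: local_group_def mem_toyG_iff)
  show "tmul g h \<in> local_group l m r S"
    using assms g h by (simp add: local_group_def pad_tmul[OF len] tmul_mem_toyG
        toy_stabilizer_def toy_subgroup_def)
  show "tcommute g h"
    using assms g h by (simp add: toy_stabilizer_def flip: tcommute_pad[OF len, of l r])
qed

lemma Collect_mem_image: "{x \<in> S. x \<in> f ` A} = f ` {a \<in> A. f a \<in> S}"
  by blast

lemma S_A_eq:
  assumes "S \<subseteq> toyG (NA + NB)"
  shows "S_A NA NB S = pad 0 NB ` local_group 0 NA NB S"
proof -
  have "g \<in> pad 0 NB ` toyG NA \<longleftrightarrow> (\<forall>k. NA \<le> k \<and> k < NA + NB \<longrightarrow> snd g ! k = PI)"
    if "g \<in> S" for g
    using mem_pad_image_iff[of g 0 NA NB] that assms by (simp add: subsetD) blast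
  then have "S_A NA NB S = {g \<in> S. g \<in> pad 0 NB ` toyG NA}"
    unfolding S_A_def by (intro Collect_cong) blast
  then show ?thesis unfolding local_group_def by (simp add: Collect_mem_image)
qed

lemma S_B_eq:
  assumes "S \<subseteq> toyG (NA + NB)"
  shows "S_B NA NB S = pad NA 0 ` local_group NA NB 0 S"
proof -
  have "g \<in> pad NA 0 ` toyG NB \<longleftrightarrow> (\<forall>k. k < NA \<longrightarrow> snd g ! k = PI)"
    if "g \<in> S" for g
    using mem_pad_image_iff[of g NA NB 0] that assms by (simp add: subsetD) (meson trans_less_add1)
  then have "S_B NA NB S = {g \<in> S. g \<in> pad NA 0 ` toyG NB}"
    unfolding S_B_def by (intro Collect_cong) blast
  then show ?thesis unfolding local_group_def by (simp add: Collect_mem_image)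
qed

lemma epistemic_pad_product:
  assumes "TA \<subseteq> toyG NA" "TB \<subseteq> toyG NB"
  shows "epistemic (NA + NB) (pad 0 NB ` TA \<union> pad NA 0 ` TB) =
           {a @ b | a b. a \<in> epistemic NA TA \<and> b \<in> epistemic NB TB}"
proof -
  have append_mem_iff: "a @ b \<in> epistemic (NA + NB) (pad 0 NB ` TA \<union> pad NA 0 ` TB) \<longleftrightarrow>
          a \<in> epistemic NA TA \<and> b \<in> epistemic NB TB" if a: "length a = NA" for a b
  proof (cases "length b = NB")
    case True
    have "toy_entry (pad 0 NB h) (a @ b) = toy_entry h a" if "h \<in> TA" for h
      using toy_entry_pad[of "[]" 0 a h NB b] that assms(1) a by (auto simp: mem_toyG_iff)
    moreover have "toy_entry (pad NA 0 h) (a @ b) = toy_entry h b" if "h \<in> TB" for h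
      using toy_entry_pad[of a NA b h 0 "[]"] that assms(2) a True by (auto simp: mem_toyG_iff)
    ultimately show ?thesis
      using append_mem_ontic_iff[OF a]
      by (simp add: epistemic_eq ball_Un conj_left_commute cong: ball_cong)
  next
    case False
    then show ?thesis using a by (simp add: epistemic_def ontic_def)
  qed
  show ?thesis
  proof (intro set_eqI iffI)
    fix s assume s: "s \<in> epistemic (NA + NB) (pad 0 NB ` TA \<union> pad NA 0 ` TB)"
    then have "length (take NA s) = NA" by (simp add: epistemic_def ontic_def)
    then have "take NA s \<in> epistemic NA TA \<and> drop NA s \<in> epistemic NB TB"
      using s append_mem_iff[of "take NA s" "drop NA s"] by simp
    then show "s \<in> {a @ b | a b. a \<in> epistemic NA TA \<and> b \<in> epistemic NB TB}"
      by (metis (mono_tags, lifting) append_take_drop_id mem_Collect_eq)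
  next
    fix s assume "s \<in> {a @ b | a b. a \<in> epistemic NA TA \<and> b \<in> epistemic NB TB}"
    then obtain a b where "s = a @ b" "a \<in> epistemic NA TA" "b \<in> epistemic NB TB" by blast
    moreover from this have "length a = NA" by (simp add: epistemic_def ontic_def)
    ultimately show "s \<in> epistemic (NA + NB) (pad 0 NB ` TA \<union> pad NA 0 ` TB)"
      using append_mem_iff[of a b] by simp
  qed
qed

lemma S_A_Un_S_B_subset: "S_A NA NB S \<union> S_B NA NB S \<subseteq> S"
  by (auto simp: S_A_def S_B_def)

lemma not_entangled_if_generated_by_local:
  assumes stab: "toy_stabilizer (NA + NB) S"
    and gen: "S = gen (NA + NB) (S_A NA NB S \<union> S_B NA NB S)"
  shows "\<not> entangled NA NB S"
proof -
  let ?RA = "local_group 0 NA NB S" and ?RB = "local_group NA NB 0 S"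
  have S_sub: "S \<subseteq> toyG (NA + NB)"
    using stab by (simp add: toy_stabilizer_def toy_subgroup_def)
  have local_stab: "toy_stabilizer NA ?RA" "toy_stabilizer NB ?RB"
    using toy_stabilizer_local_group[of 0 NA NB S] toy_stabilizer_local_group[of NA NB 0 S] stab
    by simp_all
  have "epistemic (NA + NB) S = epistemic (NA + NB) (S_A NA NB S \<union> S_B NA NB S)"
    using S_A_Un_S_B_subset S_sub by (subst gen, intro epistemic_gen) blast
  also have "\<dots> = epistemic (NA + NB) (pad 0 NB ` ?RA \<union> pad NA 0 ` ?RB)"
    by (simp add: S_A_eq S_B_eq S_sub)
  also have "\<dots> = {a @ b | a b. a \<in> epistemic NA ?RA \<and> b \<in> epistemic NB ?RB}"
    by (rule epistemic_pad_product) (auto simp: local_group_def)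
  finally show ?thesis
    using local_stab unfolding entangled_def valid_epistemic_def by blast
qed

lemma generated_by_local_if_not_entangled:
  assumes stab: "toy_stabilizer (NA + NB) S" and not_ent: "\<not> entangled NA NB S"
  shows "S = gen (NA + NB) (S_A NA NB S \<union> S_B NA NB S)"
proof -
  obtain TA TB where TA: "toy_stabilizer NA TA" and TB: "toy_stabilizer NB TB"
    and product: "epistemic (NA + NB) S = {a @ b | a b. a \<in> epistemic NA TA \<and> b \<in> epistemic NB TB}"
    using not_ent unfolding entangled_def valid_epistemic_def by blast
  define L where "L = S_A NA NB S \<union> S_B NA NB S"
  define U where "U = pad 0 NB ` TA \<union> pad NA 0 ` TB"
  have S: "toy_subgroup (NA + NB) S" "tminus_one (NA + NB) \<notin> S" and S_sub: "S \<subseteq> toyG (NA + NB)"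
    using stab by (simp_all add: toy_stabilizer_def toy_subgroup_def)
  have L_sub: "L \<subseteq> S"
    unfolding L_def by (rule S_A_Un_S_B_subset)
  then have L_sub_toyG: "L \<subseteq> toyG (NA + NB)"
    using S_sub by blast
  have TA_sub: "TA \<subseteq> toyG NA" and TB_sub: "TB \<subseteq> toyG NB"
    using TA TB by (simp_all add: toy_stabilizer_def toy_subgroup_def)
  have epistemic_U: "epistemic (NA + NB) U = epistemic (NA + NB) S"
    using product epistemic_pad_product[OF TA_sub TB_sub] by (simp add: U_def)
  have "U \<subseteq> S"
  proof
    fix u assume "u \<in> U"
    moreover have "u \<in> toyG (NA + NB)"
      using \<open>u \<in> U\<close> TA_sub TB_sub pad_mem_toyG[of _ NA 0 NB] pad_mem_toyG[of _ NB NA 0]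
      by (auto simp: U_def)
    ultimately show "u \<in> S"
      using mem_iff_fixes_epistemic[OF S] epistemic_U by (auto simp: epistemic_eq)
  qed
  then have "TA \<subseteq> local_group 0 NA NB S" "TB \<subseteq> local_group NA NB 0 S"
    using TA_sub TB_sub by (auto simp: U_def local_group_def)
  then have "U \<subseteq> L"
    unfolding U_def L_def S_A_eq[OF S_sub] S_B_eq[OF S_sub] by blast
  have "epistemic (NA + NB) (gen (NA + NB) L) = epistemic (NA + NB) L"
    using L_sub_toyG by (rule epistemic_gen)
  also have "\<dots> \<subseteq> epistemic (NA + NB) U"
    using \<open>U \<subseteq> L\<close> by (rule epistemic_antimono)
  finally have epistemic_le: "epistemic (NA + NB) (gen (NA + NB) L) \<subseteq> epistemic (NA + NB) S"
    by (simp add: epistemic_U)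
  have gen_sub: "gen (NA + NB) L \<subseteq> S"
    using S(1) L_sub by (rule gen_least)
  have "S \<subseteq> gen (NA + NB) L"
  proof
    fix g assume "g \<in> S"
    then have "g \<in> toyG (NA + NB)" "\<forall>s\<in>epistemic (NA + NB) S. toy_entry g s = 1"
      using S_sub by (auto simp: epistemic_eq)
    then show "g \<in> gen (NA + NB) L"
      using mem_iff_fixes_epistemic[OF toy_subgroup_gen[OF L_sub_toyG]] gen_sub S(2) epistemic_le
      by blast
  qed
  with gen_sub show ?thesis by (simp add: L_def)
qed

theorem mainTheorem7:
  fixes NA NB :: nat and S :: "toy set"
  assumes "toy_stabilizer (NA + NB) S"
    and "max_info (NA + NB) S"
  shows "entangled NA NB S \<longleftrightarrow> S \<noteq> gen (NA + NB) (S_A NA NB S \<union> S_B NA NB S)"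
  using not_entangled_if_generated_by_local[OF assms(1)]
    generated_by_local_if_not_entangled[OF assms(1)] by blast

end
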